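(* Let $\chi$ be a real measurable function on $[0,\infty)$ with $\chi(t)=1$ for $0\le t\le1$ and $0\le\chi(t)\le1$ for $t>1$. Suppose that $\int_T^\infty\chi(t)\,dt=0$ for some constant $T$, where $T=\min\{t:\int_t^\infty\chi(s)\,ds=0\}$ and $T>1$. Let $\sigma$ be the solution of $u\sigma(u)=\int_0^u\sigma(u-t)\chi(t)\,dt$ for $u>1$ with $\sigma(u)=1$ for $0\le u\le1$, and let $\xi(u)$ be the unique real solution of $u=\int_1^\infty\chi(v)e^{\xi(u)v}\,dv$. Then, as $u\to\infty$, $\xi(u)=\frac{\log u}{T}(1+o(1))$ and $$\sigma(u)=\exp\left(-\frac{u\log u}{T}(1+o(1))\right).$$ *)

theory Defs
  imports "HOL-Analysis.Analysis"
begin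

end

theory Submission
  imports Defs "HOL-Real_Asymp.Real_Asymp"
begin

(* Since chi vanishes beyond T, the integral equation expresses u * sigma u through the values
   of sigma on [u - T, u], with total weight at most T.  Iterating this about (1 - e) u / T times,
   down to level e u, gives sigma u <= (T / (e u))^n, hence -ln (sigma u) >= (1 - e) u ln u / T
   asymptotically.  Conversely chi has positive mass c on [b, T] for every b < T, so one step of
   length b loses at most a factor c / u, and about u / b steps give
   -ln (sigma u) <= u ln u / b asymptotically.  Both estimates use 0 <= sigma <= 1, obtained by
   bootstrapping along intervals of length 1/2.  The same two facts about chi give
   c e^(b xi u) <= u <= (T - 1) e^(T xi u), whence xi u ~ ln u / T. *)

lemma set_integrable_shift_reflect:
  fixes f :: "real \<Rightarrow> real"
  shows "set_integrable lborel {a..b} (\<lambda>t. f (u - t)) \<longleftrightarrow> set_integrable lborel {u-b..u-a} f"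
proof -
  have "set_integrable lborel {u-b..u-a} f \<longleftrightarrow>
      integrable lborel (\<lambda>x. (\<lambda>r. indicator {u-b..u-a} r *\<^sub>R f r) (u + (-1) * x))"
    unfolding set_integrable_def by (rule lborel_integrable_real_affine_iff[symmetric]) simp
  also have "(\<lambda>x. (\<lambda>r. indicator {u-b..u-a} r *\<^sub>R f r) (u + (-1) * x)) =
      (\<lambda>x. indicator {a..b} x *\<^sub>R f (u - x))"
    by (auto simp: indicator_def)
  finally show ?thesis unfolding set_integrable_def by simp
qed

lemma set_integral_shift_reflect:
  fixes f :: "real \<Rightarrow> real"
  shows "(LINT t:{a..b}|lborel. f (u - t)) = (LINT r:{u-b..u-a}|lborel. f r)"
proof -
  have "(LINT r:{u-b..u-a}|lborel. f r) =
      \<bar>-1\<bar> *\<^sub>R (\<integral>x. (\<lambda>r. indicator {u-b..u-a} r *\<^sub>R f r) (u + (-1) * x) \<partial>lborel)"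
    unfolding set_lebesgue_integral_def by (rule lborel_integral_real_affine) simp
  also have "(\<lambda>x. (\<lambda>r. indicator {u-b..u-a} r *\<^sub>R f r) (u + (-1) * x)) =
      (\<lambda>x. indicator {a..b} x *\<^sub>R f (u - x))"
    by (auto simp: indicator_def)
  finally show ?thesis unfolding set_lebesgue_integral_def by simp
qed

lemma integrable_indicator_Icc_mult: "integrable lborel (\<lambda>t. indicator {a..b::real} t * (c::real))"
  by (simp add: emeasure_lborel_Icc_eq)

lemma mult_unit_interval_bounds:
  fixes x c lo hi :: real
  assumes "lo \<le> 0" "0 \<le> hi" "lo \<le> x" "x \<le> hi" "0 \<le> c" "c \<le> 1"
  shows "lo \<le> x * c \<and> x * c \<le> hi"
  using assms
  by (smt (verit) mult_left_le mult_nonneg_nonneg mult_nonpos_nonneg mult_le_cancel_left1)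

lemma nonpos_if_bound_halves:
  fixes d :: "'a \<Rightarrow> real"
  assumes "0 \<le> K" "\<forall>x\<in>S. d x \<le> K"
    and halves: "\<And>e. 0 \<le> e \<Longrightarrow> \<forall>x\<in>S. d x \<le> e \<Longrightarrow> \<forall>x\<in>S. d x \<le> e / 2"
  shows "\<forall>x\<in>S. d x \<le> 0"
proof
  have bound: "\<forall>x\<in>S. d x \<le> K / 2 ^ n" for n
  proof (induction n)
    case (Suc n)
    then show ?case using halves[of "K / 2 ^ n"] \<open>0 \<le> K\<close> by (simp add: field_simps)
  qed (use assms in simp)
  fix x assume "x \<in> S"
  then show "d x \<le> 0"
    using LIMSEQ_le_const[OF LIMSEQ_divide_realpow_zero[of 2 K]] bound by auto
qed

lemma tendsto_ratio_squeeze: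
  fixes f h :: "'a \<Rightarrow> real"
  assumes h_pos: "\<forall>\<^sub>F x in F. 0 < h x"
    and lower: "\<And>a. a < l \<Longrightarrow>
      \<exists>g m. a < m \<and> ((\<lambda>x. g x / h x) \<longlongrightarrow> m) F \<and> (\<forall>\<^sub>F x in F. g x \<le> f x)"
    and upper: "\<And>a. l < a \<Longrightarrow>
      \<exists>g m. m < a \<and> ((\<lambda>x. g x / h x) \<longlongrightarrow> m) F \<and> (\<forall>\<^sub>F x in F. f x \<le> g x)"
  shows "((\<lambda>x. f x / h x) \<longlongrightarrow> l) F"
proof (rule order_tendstoI)
  fix a assume "a < l"
  then obtain g m where "a < m" "((\<lambda>x. g x / h x) \<longlongrightarrow> m) F" "\<forall>\<^sub>F x in F. g x \<le> f x"
    using lower by blast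
  then have "\<forall>\<^sub>F x in F. a < g x / h x" by (simp add: order_tendstoD(1))
  with h_pos \<open>\<forall>\<^sub>F x in F. g x \<le> f x\<close> show "\<forall>\<^sub>F x in F. a < f x / h x"
    by eventually_elim (smt (verit) divide_right_mono)
next
  fix a assume "l < a"
  then obtain g m where "m < a" "((\<lambda>x. g x / h x) \<longlongrightarrow> m) F" "\<forall>\<^sub>F x in F. f x \<le> g x"
    using upper by blast
  then have "\<forall>\<^sub>F x in F. g x / h x < a" by (simp add: order_tendstoD(2))
  with h_pos \<open>\<forall>\<^sub>F x in F. f x \<le> g x\<close> show "\<forall>\<^sub>F x in F. f x / h x < a"
    by eventually_elim (smt (verit) divide_right_mono)
qed

lemma relative_error_if_tendsto_ratio:
  fixes f h :: "'a \<Rightarrow> real"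
  assumes "((\<lambda>x. f x / h x) \<longlongrightarrow> 1) F" "\<forall>\<^sub>F x in F. h x \<noteq> 0"
  shows "\<exists>\<epsilon>. (\<epsilon> \<longlongrightarrow> 0) F \<and> (\<forall>\<^sub>F x in F. f x = h x * (1 + \<epsilon> x))"
proof (intro exI conjI)
  show "((\<lambda>x. f x / h x - 1) \<longlongrightarrow> 0) F"
    using tendsto_diff[OF assms(1) tendsto_const[of 1]] by simp
  show "\<forall>\<^sub>F x in F. f x = h x * (1 + (f x / h x - 1))"
    using assms(2) by eventually_elim simp
qed

locale cutoff_kernel =
  fixes chi :: "real \<Rightarrow> real" and T :: real
  assumes chi_meas: "set_borel_measurable lborel {0..} chi"
    and chi_one: "\<And>t. 0 \<le> t \<Longrightarrow> t \<le> 1 \<Longrightarrow> chi t = 1"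
    and chi_bounds: "\<And>t. t > 1 \<Longrightarrow> 0 \<le> chi t \<and> chi t \<le> 1"
    and T_gt: "T > 1"
    and T_zero: "(\<integral>\<^sup>+ s\<in>{T..}. ennreal (chi s) \<partial>lborel) = 0"
    and T_min: "\<And>t. 0 \<le> t \<Longrightarrow> (\<integral>\<^sup>+ s\<in>{t..}. ennreal (chi s) \<partial>lborel) = 0 \<Longrightarrow> T \<le> t"
begin

lemma chi_range: "0 \<le> t \<Longrightarrow> 0 \<le> chi t \<and> chi t \<le> 1"
  using chi_one chi_bounds by (cases "t \<le> 1") auto

lemma borel_measurable_indicator_chi:
  assumes "S \<subseteq> {0..}" "S \<in> sets borel"
  shows "(\<lambda>t. indicator S t * chi t) \<in> borel_measurable lborel"
proof -
  have chi_meas': "(\<lambda>t. indicator {0..} t * chi t) \<in> borel_measurable lborel"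
    using chi_meas by (simp add: set_borel_measurable_def)
  have "(\<lambda>t. indicator S t * (indicator {0..} t * chi t)) \<in> borel_measurable lborel"
    using assms(2) by (intro borel_measurable_times[OF _ chi_meas']) auto
  also have "(\<lambda>t. indicator S t * (indicator {0..} t * chi t)) = (\<lambda>t. indicator S t * chi t)"
    using assms(1) by (intro ext) (auto simp: indicator_def)
  finally show ?thesis .
qed

lemma set_integrable_chi:
  assumes "0 \<le> a"
  shows "set_integrable lborel {a..b} chi"
  unfolding set_integrable_def
proof (rule Bochner_Integration.integrable_bound)
  show "integrable lborel (\<lambda>t. indicator {a..b} t * (1::real))"
    by (rule integrable_indicator_Icc_mult)
  show "(\<lambda>t. indicator {a..b} t *\<^sub>R chi t) \<in> borel_measurable lborel"
    using borel_measurable_indicator_chi[of "{a..b}"] assms by auto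
  show "AE t in lborel. norm (indicator {a..b} t *\<^sub>R chi t) \<le> norm (indicator {a..b} t * (1::real))"
    using chi_range assms by (auto simp: indicator_def)
qed

lemma chi_mass_le:
  assumes "0 \<le> a" "a \<le> b"
  shows "(LINT t:{a..b}|lborel. chi t) \<le> b - a"
proof -
  have "(LINT t:{a..b}|lborel. chi t) \<le> (LINT t:{a..b}|lborel. 1)"
    using assms chi_range set_integrable_chi[OF assms(1)] integrable_indicator_Icc_mult[of a b 1]
    by (intro set_integral_mono) (auto simp: set_integrable_def)
  then show ?thesis
    using assms by (simp add: set_lebesgue_integral_def)
qed

lemma chi_mass_nonneg:
  assumes "0 \<le> a"
  shows "0 \<le> (LINT t:{a..b}|lborel. chi t)"
  unfolding set_lebesgue_integral_def using assms chi_range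
  by (intro integral_nonneg_AE AE_I2) (auto simp: indicator_def)

lemma nn_integral_chi_tail_eq_0_iff:
  assumes "0 \<le> a"
  shows "(\<integral>\<^sup>+ s\<in>{a..}. ennreal (chi s) \<partial>lborel) = 0 \<longleftrightarrow> (AE s in lborel. a \<le> s \<longrightarrow> chi s = 0)"
proof -
  have "(\<lambda>s. ennreal (indicator {a..} s * chi s)) \<in> borel_measurable lborel"
    using assms by (intro measurable_compose_rev[OF _ borel_measurable_indicator_chi]) auto
  moreover have "ennreal (chi s) * indicator {a..} s = ennreal (indicator {a..} s * chi s)" for s
    by (auto simp: indicator_def)
  moreover have "ennreal (indicator {a..} s * chi s) = 0 \<longleftrightarrow> (a \<le> s \<longrightarrow> chi s = 0)" for s
    using assms chi_range[of s] by (auto simp: indicator_def)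
  ultimately show ?thesis
    by (simp add: nn_integral_0_iff_AE)
qed

lemma AE_chi_eq_0: "AE t in lborel. T \<le> t \<longrightarrow> chi t = 0"
  using T_zero T_gt nn_integral_chi_tail_eq_0_iff[of T] by simp

lemma chi_mass_pos:
  assumes "0 \<le> a" "a < T"
  shows "0 < (LINT t:{a..T}|lborel. chi t)"
proof -
  have int: "integrable lborel (\<lambda>t. indicator {a..T} t * chi t)"
    using set_integrable_chi[OF assms(1)] by (simp add: set_integrable_def)
  have nonneg: "AE t in lborel. 0 \<le> indicator {a..T} t * chi t"
    using assms chi_range by (intro AE_I2) (auto simp: indicator_def)
  have "(LINT t:{a..T}|lborel. chi t) \<noteq> 0"
  proof
    assume "(LINT t:{a..T}|lborel. chi t) = 0"
    then have "AE t in lborel. indicator {a..T} t * chi t = 0"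
      using integral_nonneg_eq_0_iff_AE[OF int nonneg] by (simp add: set_lebesgue_integral_def)
    with AE_chi_eq_0 have "AE s in lborel. a \<le> s \<longrightarrow> chi s = 0"
      by eventually_elim (auto simp: indicator_def split: if_splits)
    then have "T \<le> a"
      using T_min assms nn_integral_chi_tail_eq_0_iff by simp
    with assms show False by simp
  qed
  with chi_mass_nonneg[OF assms(1), of T] show ?thesis by simp
qed

definition exp_moment :: "real \<Rightarrow> real" where
  "exp_moment z = (LINT v:{1..}|lborel. chi v * exp (z * v))"

lemma exp_moment_integrand_bound:
  "AE v in lborel. 0 \<le> indicator {1..} v * (chi v * exp (z * v)) \<and>
     indicator {1..} v * (chi v * exp (z * v)) \<le> indicator {1..T} v * exp (max z 0 * T)"
  using AE_chi_eq_0
proof eventually_elim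
  case (elim v)
  show ?case
  proof (cases "1 \<le> v \<and> v \<le> T")
    case True
    have "z * v \<le> max z 0 * v" using True by (intro mult_right_mono) auto
    also have "\<dots> \<le> max z 0 * T" using True by (intro mult_left_mono) auto
    finally have "exp (z * v) \<le> exp (max z 0 * T)" by simp
    moreover have "chi v * exp (z * v) \<le> exp (z * v)"
      using chi_range[of v] True by (simp add: mult_left_le_one_le)
    ultimately have "chi v * exp (z * v) \<le> exp (max z 0 * T)" by linarith
    then show ?thesis using True chi_range[of v] by (simp add: indicator_def)
  next
    case False
    then consider "v < 1" | "T < v" by linarith
    then show ?thesis by cases (use elim in \<open>auto simp: indicator_def\<close>)
  qed
qed

lemma integrable_exp_moment:
  "integrable lborel (\<lambda>v. indicator {1..} v * (chi v * exp (z * v)))"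
proof (rule Bochner_Integration.integrable_bound)
  show "integrable lborel (\<lambda>v. indicator {1..T} v * exp (max z 0 * T))"
    by (rule integrable_indicator_Icc_mult)
  have "(\<lambda>v. indicator {1..} v * chi v * exp (z * v)) \<in> borel_measurable lborel"
    by (intro borel_measurable_times borel_measurable_indicator_chi) auto
  then show "(\<lambda>v. indicator {1..} v * (chi v * exp (z * v))) \<in> borel_measurable lborel"
    by (simp add: mult.assoc)
  show "AE v in lborel. norm (indicator {1..} v * (chi v * exp (z * v))) \<le>
      norm (indicator {1..T} v * exp (max z 0 * T))"
    by (rule eventually_mono[OF exp_moment_integrand_bound[of z]]) simp
qed

lemma exp_moment_le: "exp_moment z \<le> (T - 1) * exp (max z 0 * T)"
proof -
  have "exp_moment z \<le> (\<integral>v. indicator {1..T} v * exp (max z 0 * T) \<partial>lborel)"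
    unfolding exp_moment_def set_lebesgue_integral_def
  proof (rule integral_mono_AE[OF _ integrable_indicator_Icc_mult])
    show "integrable lborel (\<lambda>v. indicator {1..} v *\<^sub>R (chi v * exp (z * v)))"
      using integrable_exp_moment[of z] by simp
    show "AE v in lborel. indicator {1..} v *\<^sub>R (chi v * exp (z * v)) \<le>
        indicator {1..T} v * exp (max z 0 * T)"
      by (rule eventually_mono[OF exp_moment_integrand_bound[of z]]) simp
  qed
  then show ?thesis using T_gt by simp
qed

lemma exp_moment_ge:
  assumes "1 \<le> a" "0 \<le> z"
  shows "(LINT t:{a..T}|lborel. chi t) * exp (z * a) \<le> exp_moment z"
proof -
  have "(LINT t:{a..T}|lborel. chi t) * exp (z * a) =
      (\<integral>v. indicator {a..T} v * chi v * exp (z * a) \<partial>lborel)"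
    by (simp add: set_lebesgue_integral_def)
  also have "\<dots> \<le> (\<integral>v. indicator {1..} v * (chi v * exp (z * v)) \<partial>lborel)"
  proof (rule integral_mono[OF _ integrable_exp_moment])
    show "integrable lborel (\<lambda>v. indicator {a..T} v * chi v * exp (z * a))"
      using set_integrable_chi[of a T] assms by (simp add: set_integrable_def)
    fix v
    have "chi v * exp (z * a) \<le> chi v * exp (z * v)" if "a \<le> v"
      using that assms chi_range[of v] by (intro mult_left_mono) (auto intro: mult_left_mono)
    then show "indicator {a..T} v * chi v * exp (z * a) \<le> indicator {1..} v * (chi v * exp (z * v))"
      using assms chi_range[of v] by (auto simp: indicator_def)
  qed
  also have "\<dots> = exp_moment z"
    by (simp add: exp_moment_def set_lebesgue_integral_def)
  finally show ?thesis .
qed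

lemma exp_moment_inverse_ge:
  assumes "T - 1 < u" "u = exp_moment z"
  shows "0 < z \<and> (ln u - ln (T - 1)) / T \<le> z"
proof -
  have bound: "u \<le> (T - 1) * exp (max z 0 * T)"
    using assms exp_moment_le by simp
  then have "0 < z"
    using assms(1) by (cases "0 < z") auto
  with bound have "u \<le> (T - 1) * exp (z * T)" by simp
  then have "ln u \<le> ln ((T - 1) * exp (z * T))"
    using assms(1) T_gt by simp
  also have "\<dots> = ln (T - 1) + z * T"
    using T_gt by (simp add: ln_mult)
  finally show ?thesis
    using \<open>0 < z\<close> T_gt by (simp add: field_simps)
qed

lemma exp_moment_inverse_le:
  assumes "1 \<le> b" "b < T" "T - 1 < u" "u = exp_moment z"
  shows "z \<le> (ln u - ln (LINT t:{b..T}|lborel. chi t)) / b"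
proof -
  define c where "c = (LINT t:{b..T}|lborel. chi t)"
  have "0 < c"
    unfolding c_def using chi_mass_pos assms by simp
  have "0 < z"
    using exp_moment_inverse_ge assms by blast
  have "ln c + z * b = ln (c * exp (z * b))"
    using \<open>0 < c\<close> by (simp add: ln_mult)
  also have "\<dots> \<le> ln u"
    using exp_moment_ge[of b z] assms \<open>0 < c\<close> \<open>0 < z\<close> unfolding c_def by (intro ln_mono) auto
  finally show ?thesis
    using assms unfolding c_def by (simp add: field_simps)
qed

lemma approx_T_from_below:
  assumes "1 < a"
  obtains b where "1 < b" "b < T" "T / b < a"
proof -
  have "max 1 (T / a) < T"
    using T_gt assms by (simp add: divide_less_eq)
  then obtain b where b: "max 1 (T / a) < b" "b < T"
    using dense by blast
  then have "1 < b" "T / a < b"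
    by simp_all
  then have "T / b < a"
    using assms by (simp add: divide_less_eq mult.commute)
  with \<open>1 < b\<close> \<open>b < T\<close> show ?thesis
    using that by blast
qed

lemma exp_moment_inverse_asymp:
  assumes xi: "\<And>u. 0 < u \<Longrightarrow> u = exp_moment (xi u)"
  shows "((\<lambda>u. xi u / (ln u / T)) \<longlongrightarrow> 1) at_top"
proof (rule tendsto_ratio_squeeze)
  show "\<forall>\<^sub>F u in at_top. 0 < ln u / T"
    using eventually_gt_at_top[of 1] by eventually_elim (use T_gt in simp)
next
  fix a :: real assume "a < 1"
  define g where "g u = (ln u - ln (T - 1)) / T" for u
  have "((\<lambda>u. g u / (ln u / T)) \<longlongrightarrow> 1) at_top"
    unfolding g_def using T_gt by real_asymp
  moreover have "\<forall>\<^sub>F u in at_top. g u \<le> xi u"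
    using eventually_gt_at_top[of T]
    by eventually_elim (use exp_moment_inverse_ge[OF _ xi] T_gt in \<open>simp add: g_def\<close>)
  ultimately show "\<exists>g m. a < m \<and> ((\<lambda>u. g u / (ln u / T)) \<longlongrightarrow> m) at_top \<and>
      (\<forall>\<^sub>F u in at_top. g u \<le> xi u)"
    using \<open>a < 1\<close> by blast
next
  fix a :: real assume "1 < a"
  obtain b where "1 < b" "b < T" "T / b < a"
    using approx_T_from_below[OF \<open>1 < a\<close>] .
  define c where "c = (LINT t:{b..T}|lborel. chi t)"
  define g where "g u = (ln u - ln c) / b" for u
  have "((\<lambda>u. g u / (ln u / T)) \<longlongrightarrow> T / b) at_top"
    unfolding g_def using \<open>1 < b\<close> T_gt by (real_asymp simp: field_simps)
  moreover have "\<forall>\<^sub>F u in at_top. xi u \<le> g u"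
    using eventually_gt_at_top[of T]
    by eventually_elim
      (use exp_moment_inverse_le[OF _ _ _ xi] \<open>1 < b\<close> \<open>b < T\<close> T_gt in \<open>simp add: g_def c_def\<close>)
  ultimately show "\<exists>g m. m < a \<and> ((\<lambda>u. g u / (ln u / T)) \<longlongrightarrow> m) at_top \<and>
      (\<forall>\<^sub>F u in at_top. xi u \<le> g u)"
    using \<open>T / b < a\<close> by blast
qed

end

locale kernel_solution = cutoff_kernel +
  fixes sigma :: "real \<Rightarrow> real"
  assumes sigma_init: "\<And>u. 0 \<le> u \<Longrightarrow> u \<le> 1 \<Longrightarrow> sigma u = 1"
    and sigma_int: "\<And>u. u > 1 \<Longrightarrow> set_integrable lborel {0..u} (\<lambda>t. sigma (u - t) * chi t)"
    and sigma_eq: "\<And>u. u > 1 \<Longrightarrow> u * sigma u = (LINT t:{0..u}|lborel. sigma (u - t) * chi t)"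
begin

lemma integrable_sigma_conv:
  "1 < v \<Longrightarrow> integrable lborel (\<lambda>t. indicator {0..v} t * (sigma (v - t) * chi t))"
  using sigma_int by (simp add: set_integrable_def)

lemma sigma_conv_eq:
  "1 < v \<Longrightarrow> v * sigma v = (\<integral>t. indicator {0..v} t * (sigma (v - t) * chi t) \<partial>lborel)"
  using sigma_eq by (simp add: set_lebesgue_integral_def)

lemma set_integrable_sigma:
  assumes "1 < u"
  shows "set_integrable lborel {u-1..u} sigma"
proof -
  have "set_integrable lborel {0..1} (\<lambda>t. sigma (u - t) * chi t)"
    using assms by (intro set_integrable_subset[OF sigma_int[OF assms]]) auto
  also have "?this \<longleftrightarrow> set_integrable lborel {0..1} (\<lambda>t. sigma (u - t))"
    by (rule set_integrable_cong) (auto simp: chi_one)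
  finally show ?thesis
    using set_integrable_shift_reflect[of 0 1 sigma u] by simp
qed

lemma sigma_abs_le:
  assumes A: "1 \<le> A" and range: "\<forall>r\<in>{0..A}. 0 \<le> sigma r \<and> sigma r \<le> 1"
    and v: "A < v" "v \<le> A + 1"
  shows "v * \<bar>sigma v\<bar> \<le> v + (LINT r:{A..v}|lborel. \<bar>sigma r\<bar>)"
proof -
  have "1 < v" using A v by simp
  have "set_integrable lborel {A..v} (\<lambda>r. \<bar>sigma r\<bar>)"
    using A v by (intro set_integrable_subset[OF set_integrable_abs[OF set_integrable_sigma]]) auto
  then have int_refl: "set_integrable lborel {0..v-A} (\<lambda>t. \<bar>sigma (v - t)\<bar>)"
    using set_integrable_shift_reflect[of 0 "v-A" "\<lambda>r. \<bar>sigma r\<bar>" v] by simp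
  have "v * \<bar>sigma v\<bar> = \<bar>\<integral>t. indicator {0..v} t * (sigma (v - t) * chi t) \<partial>lborel\<bar>"
    using sigma_conv_eq[OF \<open>1 < v\<close>] \<open>1 < v\<close> by (metis abs_mult abs_of_pos less_trans zero_less_one)
  also have "\<dots> \<le> (\<integral>t. \<bar>indicator {0..v} t * (sigma (v - t) * chi t)\<bar> \<partial>lborel)"
    by (rule integral_abs_bound)
  also have "\<dots> \<le> (\<integral>t. indicator {0..v} t * 1 + indicator {0..v-A} t * \<bar>sigma (v - t)\<bar> \<partial>lborel)"
  proof (rule integral_mono)
    show "integrable lborel (\<lambda>t. \<bar>indicator {0..v} t * (sigma (v - t) * chi t)\<bar>)"
      using integrable_sigma_conv[OF \<open>1 < v\<close>] by simp
    show "integrable lborel (\<lambda>t. indicator {0..v} t * 1 + indicator {0..v-A} t * \<bar>sigma (v - t)\<bar>)"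
      using int_refl integrable_indicator_Icc_mult[of 0 v 1] by (simp add: set_integrable_def)
    fix t
    have "\<bar>sigma (v - t) * chi t\<bar> \<le> \<bar>sigma (v - t)\<bar>" if "0 \<le> t"
      using chi_range[OF that] by (simp add: abs_mult mult_left_le)
    moreover have "\<bar>sigma (v - t) * chi t\<bar> \<le> 1" if "v - A < t" "t \<le> v"
      using range[rule_format, of "v - t"] chi_range[of t] that v
      by (simp add: abs_mult mult_le_one)
    ultimately show "\<bar>indicator {0..v} t * (sigma (v - t) * chi t)\<bar> \<le>
        indicator {0..v} t * 1 + indicator {0..v-A} t * \<bar>sigma (v - t)\<bar>"
      by (auto simp: indicator_def not_le)
  qed
  also have "\<dots> = v + (LINT t:{0..v-A}|lborel. \<bar>sigma (v - t)\<bar>)"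
    using int_refl integrable_indicator_Icc_mult[of 0 v 1] \<open>1 < v\<close>
    by (simp add: set_integrable_def set_lebesgue_integral_def)
  also have "(LINT t:{0..v-A}|lborel. \<bar>sigma (v - t)\<bar>) = (LINT r:{A..v}|lborel. \<bar>sigma r\<bar>)"
    using set_integral_shift_reflect[of 0 "v-A" "\<lambda>r. \<bar>sigma r\<bar>" v] by simp
  finally show ?thesis .
qed

(* sigma is only assumed locally integrable, so boundedness on the next half unit has to be
   extracted from the equation before its range can be propagated. *)
lemma sigma_bounded_right_of:
  assumes A: "1 \<le> A" and range: "\<forall>r\<in>{0..A}. 0 \<le> sigma r \<and> sigma r \<le> 1"
  obtains K where "0 \<le> K" "\<forall>v\<in>{A<..A+1/2}. \<bar>sigma v\<bar> \<le> K"
proof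
  define C where "C = (LINT r:{A-1/2..A+1/2}|lborel. \<bar>sigma r\<bar>)"
  have int_abs: "set_integrable lborel {A-1/2..A+1/2} (\<lambda>r. \<bar>sigma r\<bar>)"
    using set_integrable_abs[OF set_integrable_sigma[of "A+1/2"]] A by simp
  have "0 \<le> C"
    unfolding C_def set_lebesgue_integral_def by (simp add: integral_nonneg_AE)
  then show "0 \<le> 1 + C" by simp
  show "\<forall>v\<in>{A<..A+1/2}. \<bar>sigma v\<bar> \<le> 1 + C"
  proof
    fix v assume v: "v \<in> {A<..A+1/2}"
    then have "1 < v" using A by simp
    have "v * \<bar>sigma v\<bar> \<le> v + (LINT r:{A..v}|lborel. \<bar>sigma r\<bar>)"
      using sigma_abs_le[OF A range] v by simp
    also have "(LINT r:{A..v}|lborel. \<bar>sigma r\<bar>) \<le> C"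
      unfolding C_def set_lebesgue_integral_def
      using set_integrable_subset[OF int_abs, of "{A..v}"] int_abs v
      by (intro integral_mono) (auto simp: set_integrable_def indicator_def)
    also have "v + C \<le> v * (1 + C)"
      using mult_right_mono[of 1 v C] \<open>0 \<le> C\<close> \<open>1 < v\<close> by (simp add: distrib_left)
    finally show "\<bar>sigma v\<bar> \<le> 1 + C"
      using \<open>1 < v\<close> by simp
  qed
qed

lemma sigma_conv_integrand_bounds:
  assumes range: "\<forall>r\<in>{0..A}. 0 \<le> sigma r \<and> sigma r \<le> 1"
    and e: "0 \<le> e" "\<forall>r\<in>{0..v}. -e \<le> sigma r \<and> sigma r \<le> 1 + e"
  shows "indicator {0..v-A} t * (-e) \<le> indicator {0..v} t * (sigma (v - t) * chi t) \<and>
    indicator {0..v} t * (sigma (v - t) * chi t) \<le>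
      indicator {0..v} t * 1 + indicator {0..v-A} t * e"
proof (cases "0 \<le> t \<and> t \<le> v")
  case True
  then have "0 \<le> chi t" "chi t \<le> 1" using chi_range by auto
  show ?thesis
  proof (cases "t \<le> v - A")
    case True
    then show ?thesis
      using mult_unit_interval_bounds[of "-e" "1 + e" "sigma (v - t)" "chi t"]
        e \<open>0 \<le> chi t\<close> \<open>chi t \<le> 1\<close> \<open>0 \<le> t \<and> t \<le> v\<close>
      by (simp add: indicator_def)
  next
    case False
    then show ?thesis
      using mult_unit_interval_bounds[of 0 1 "sigma (v - t)" "chi t"]
        range e(1) \<open>0 \<le> chi t\<close> \<open>chi t \<le> 1\<close> \<open>0 \<le> t \<and> t \<le> v\<close>
      by (simp add: indicator_def)
  qed
qed (use e in \<open>auto simp: indicator_def\<close>)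

(* On (A, A + 1/2] the part of the convolution that sees values beyond A has weight at most
   (v - A) / v <= 1/2, so the distance of sigma to [0, 1] at least halves. *)
lemma sigma_deviation_halves:
  assumes A: "1 \<le> A" and range: "\<forall>r\<in>{0..A}. 0 \<le> sigma r \<and> sigma r \<le> 1"
    and e: "0 \<le> e" "\<forall>v\<in>{A<..A+1/2}. -e \<le> sigma v \<and> sigma v \<le> 1 + e"
    and v: "v \<in> {A<..A+1/2}"
  shows "-(e/2) \<le> sigma v \<and> sigma v \<le> 1 + e/2"
proof -
  have "1 < v" using A v by simp
  have "-e \<le> sigma r \<and> sigma r \<le> 1 + e" if "0 \<le> r" "r \<le> v" for r
  proof (cases "r \<le> A")
    case True
    then show ?thesis using range[rule_format, of r] e(1) that by simp
  next
    case False
    then show ?thesis using e(2)[rule_format, of r] that v by simp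
  qed
  then have "\<forall>r\<in>{0..v}. -e \<le> sigma r \<and> sigma r \<le> 1 + e"
    by auto
  note bounds = sigma_conv_integrand_bounds[OF range e(1) this]
  have "v * sigma v \<le> (\<integral>t. indicator {0..v} t * 1 + indicator {0..v-A} t * e \<partial>lborel)"
    unfolding sigma_conv_eq[OF \<open>1 < v\<close>]
    using bounds integrable_sigma_conv[OF \<open>1 < v\<close>] integrable_indicator_Icc_mult
    by (intro integral_mono Bochner_Integration.integrable_add) auto
  also have "\<dots> = v + (v - A) * e"
    using \<open>1 < v\<close> v by simp
  finally have upper: "v * sigma v \<le> v + (v - A) * e" .
  have "(\<integral>t. indicator {0..v-A} t * (-e) \<partial>lborel) \<le> v * sigma v"
    unfolding sigma_conv_eq[OF \<open>1 < v\<close>]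
    using bounds integrable_sigma_conv[OF \<open>1 < v\<close>] integrable_indicator_Icc_mult
    by (intro integral_mono) auto
  then have lower: "-((v - A) * e) \<le> v * sigma v"
    using v by simp
  have "(v - A) * e \<le> v / 2 * e"
    using v A e by (intro mult_right_mono) auto
  with upper lower have "v * (-(e/2)) \<le> v * sigma v" "v * sigma v \<le> v * (1 + e/2)"
    by (simp_all add: algebra_simps)
  then show ?thesis
    using \<open>1 < v\<close> mult_le_cancel_left_pos[of v] by (meson less_trans zero_less_one)
qed

lemma sigma_range_extend:
  assumes A: "1 \<le> A" and range: "\<forall>r\<in>{0..A}. 0 \<le> sigma r \<and> sigma r \<le> 1"
  shows "\<forall>r\<in>{0..A+1/2}. 0 \<le> sigma r \<and> sigma r \<le> 1"
proof -
  obtain K where K: "0 \<le> K" "\<forall>v\<in>{A<..A+1/2}. \<bar>sigma v\<bar> \<le> K"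
    using sigma_bounded_right_of[OF A range] by blast
  have "\<forall>v\<in>{A<..A+1/2}. max (- sigma v) (sigma v - 1) \<le> 0"
  proof (rule nonpos_if_bound_halves[OF K(1)])
    show "\<forall>v\<in>{A<..A+1/2}. max (- sigma v) (sigma v - 1) \<le> K"
      using K by (auto simp: abs_le_iff)
    fix e :: real
    assume "0 \<le> e" "\<forall>v\<in>{A<..A+1/2}. max (- sigma v) (sigma v - 1) \<le> e"
    then have bounds: "\<forall>v\<in>{A<..A+1/2}. -e \<le> sigma v \<and> sigma v \<le> 1 + e"
      by auto
    show "\<forall>v\<in>{A<..A+1/2}. max (- sigma v) (sigma v - 1) \<le> e / 2"
    proof
      fix v assume "v \<in> {A<..A+1/2}"
      from sigma_deviation_halves[OF A range \<open>0 \<le> e\<close> bounds this]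
      show "max (- sigma v) (sigma v - 1) \<le> e / 2" unfolding max.bounded_iff by linarith
    qed
  qed
  then show ?thesis
    using range by (auto simp: not_le)
qed

lemma sigma_range:
  assumes "0 \<le> u"
  shows "0 \<le> sigma u \<and> sigma u \<le> 1"
proof -
  have range: "\<forall>r\<in>{0..1 + n/2}. 0 \<le> sigma r \<and> sigma r \<le> 1" for n :: nat
  proof (induction n)
    case 0
    then show ?case using sigma_init by simp
  next
    case (Suc n)
    have "1 + real (Suc n) / 2 = (1 + n/2) + 1/2"
      by (simp add: field_simps)
    with sigma_range_extend[OF _ Suc.IH] show ?case
      by simp
  qed
  have "u \<in> {0..1 + nat \<lceil>2 * u\<rceil> / 2}"
    using assms by simp linarith
  with range show ?thesis
    by blast
qed

lemma sigma_le_of_window: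
  assumes s: "1 < s" and M: "0 \<le> M"
    and window: "\<And>r. 0 \<le> r \<Longrightarrow> s - T \<le> r \<Longrightarrow> r \<le> s \<Longrightarrow> sigma r \<le> M"
  shows "s * sigma s \<le> M * T"
proof -
  have "s * sigma s \<le> (\<integral>t. indicator {0..T} t * M \<partial>lborel)"
    unfolding sigma_conv_eq[OF s]
  proof (rule integral_mono_AE[OF integrable_sigma_conv[OF s] integrable_indicator_Icc_mult])
    show "AE t in lborel. indicator {0..s} t * (sigma (s - t) * chi t) \<le> indicator {0..T} t * M"
      using AE_chi_eq_0
    proof eventually_elim
      case (elim t)
      show ?case
      proof (cases "0 \<le> t \<and> t \<le> s \<and> t \<le> T")
        case True
        then have "0 \<le> sigma (s - t) \<and> sigma (s - t) \<le> M"
          using sigma_range[of "s - t"] window[of "s - t"] by simp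
        then show ?thesis
          using mult_unit_interval_bounds[of 0 M "sigma (s - t)" "chi t"] chi_range[of t] M True
          by (simp add: indicator_def)
      qed (use elim M in \<open>auto simp: indicator_def\<close>)
    qed
  qed
  also have "\<dots> = M * T"
    using T_gt by simp
  finally show ?thesis .
qed

lemma sigma_ge_of_window:
  assumes s: "1 < s" and ab: "0 \<le> a" "a \<le> b" "b \<le> s"
    and window: "\<And>r. 0 \<le> r \<Longrightarrow> r \<le> s - a \<Longrightarrow> L \<le> sigma r"
  shows "L * (LINT t:{a..b}|lborel. chi t) \<le> s * sigma s"
proof -
  have "L * (LINT t:{a..b}|lborel. chi t) = (\<integral>t. indicator {a..b} t * (L * chi t) \<partial>lborel)"
    by (simp add: set_lebesgue_integral_def mult.left_commute)
  also have "\<dots> \<le> s * sigma s"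
    unfolding sigma_conv_eq[OF s]
  proof (rule integral_mono[OF _ integrable_sigma_conv[OF s]])
    show "integrable lborel (\<lambda>t. indicator {a..b} t * (L * chi t))"
      using set_integrable_chi[OF ab(1), of b] by (simp add: set_integrable_def mult.left_commute)
    fix t
    show "indicator {a..b} t * (L * chi t) \<le> indicator {0..s} t * (sigma (s - t) * chi t)"
    proof (cases "0 \<le> t \<and> t \<le> s")
      case True
      then have "0 \<le> chi t" "0 \<le> sigma (s - t)"
        using chi_range sigma_range by auto
      moreover have "L * chi t \<le> sigma (s - t) * chi t" if "a \<le> t"
        using window[of "s - t"] True that \<open>0 \<le> chi t\<close> by (intro mult_right_mono) auto
      ultimately show ?thesis
        using True by (auto simp: indicator_def)
    qed (use ab in \<open>auto simp: indicator_def\<close>)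
  qed
  finally show ?thesis .
qed

lemma sigma_le_power:
  assumes "0 < y" "y + real n * T \<le> s"
  shows "sigma s \<le> (T / y) ^ n"
  using assms(2)
proof (induction n arbitrary: s)
  case 0
  then show ?case using sigma_range[of s] assms(1) by simp
next
  case (Suc n)
  have "0 \<le> real n * T" "real (Suc n) * T = T + real n * T"
    using T_gt by (simp_all add: algebra_simps)
  with Suc.prems assms(1) T_gt have s: "1 < s" "y + T \<le> s"
    by linarith+
  have "s * sigma s \<le> (T / y) ^ n * T"
  proof (rule sigma_le_of_window[OF \<open>1 < s\<close>])
    show "0 \<le> (T / y) ^ n" using assms(1) T_gt by simp
    fix r assume "s - T \<le> r"
    then show "sigma r \<le> (T / y) ^ n"
      using Suc.IH[of r] Suc.prems by (simp add: algebra_simps)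
  qed
  then have "sigma s \<le> (T / y) ^ n * T / s"
    using s by (subst pos_le_divide_eq) (auto simp: mult.commute)
  also have "\<dots> \<le> (T / y) ^ n * T / y"
    using s assms(1) T_gt by (intro divide_left_mono) auto
  finally show ?case
    by (simp add: mult.commute)
qed

lemma sigma_ge_power:
  assumes ab: "0 < a" "a \<le> b" "b \<le> U" "1 \<le> U" "U \<le> S"
    and beta: "0 \<le> beta" "\<And>r. 0 \<le> r \<Longrightarrow> r \<le> U \<Longrightarrow> beta \<le> sigma r"
    and s: "0 \<le> s" "s \<le> S" "s \<le> U + real n * a"
  shows "beta * ((LINT t:{a..b}|lborel. chi t) / S) ^ n \<le> sigma s"
  using s
proof (induction n arbitrary: s)
  case 0
  then show ?case using beta by simp
next
  case (Suc n)
  define c where "c = (LINT t:{a..b}|lborel. chi t)"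
  have "0 \<le> c / S" "c / S \<le> 1"
    unfolding c_def using chi_mass_nonneg chi_mass_le[of a b] ab by simp_all
  then have "beta * (c / S) ^ Suc n \<le> beta * (c / S) ^ n"
    using beta(1) by (intro mult_left_mono power_decreasing) auto
  show ?case
  proof (cases "s \<le> U + real n * a")
    case True
    with Suc \<open>beta * (c / S) ^ Suc n \<le> beta * (c / S) ^ n\<close> show ?thesis
      unfolding c_def by fastforce
  next
    case False
    have "0 \<le> real n * a" using ab by simp
    then have "1 < s" using False ab by linarith
    have "beta * (c / S) ^ n * c \<le> s * sigma s"
      unfolding c_def
    proof (rule sigma_ge_of_window[OF \<open>1 < s\<close>])
      show "0 \<le> a" "a \<le> b" "b \<le> s" using ab False \<open>0 \<le> real n * a\<close> by linarith+
      fix r assume "0 \<le> r" "r \<le> s - a"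
      then show "beta * ((LINT t:{a..b}|lborel. chi t) / S) ^ n \<le> sigma r"
        using Suc.IH[of r] Suc.prems ab by (simp add: algebra_simps)
    qed
    also have "\<dots> \<le> S * sigma s"
      using sigma_range[of s] Suc.prems by (intro mult_right_mono) auto
    finally show ?thesis
      using ab unfolding c_def by (simp add: pos_divide_le_eq ac_simps)
  qed
qed

lemma sigma_uniformly_pos:
  assumes "0 \<le> U"
  obtains beta where "0 < beta" "\<And>r. 0 \<le> r \<Longrightarrow> r \<le> U \<Longrightarrow> beta \<le> sigma r"
proof
  define S where "S = max 1 U"
  define n where "n = nat \<lceil>2 * S\<rceil>"
  have "(LINT t:{1/2..1}|lborel. chi t) = (LINT t:{1/2..1::real}|lborel. 1)"
    by (rule set_lebesgue_integral_cong) (auto simp: chi_one)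
  then have c: "(LINT t:{1/2..1}|lborel. chi t) = 1/2"
    by (simp add: set_lebesgue_integral_def)
  show "0 < (1 / 2 / S) ^ n"
    by (simp add: S_def)
  fix r assume "0 \<le> r" "r \<le> U"
  moreover have "S \<le> 1 + real n * (1/2)"
    unfolding n_def by linarith
  ultimately have "1 * ((LINT t:{1/2..1}|lborel. chi t) / S) ^ n \<le> sigma r"
    using sigma_init by (intro sigma_ge_power[where U=1]) (auto simp: S_def)
  then show "(1 / 2 / S) ^ n \<le> sigma r"
    using c by simp
qed

lemma sigma_pos: "0 \<le> u \<Longrightarrow> 0 < sigma u"
  using sigma_uniformly_pos[of u] by (metis order.refl order_less_le_trans)

lemma neg_ln_sigma_ge:
  assumes e: "0 < e" "e < 1"
  shows "\<forall>\<^sub>F u in at_top. ((1 - e) * u / T - 1) * ln (e * u / T) \<le> - ln (sigma u)"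
  using eventually_gt_at_top[of "T / e"]
proof eventually_elim
  case (elim u)
  have "0 < T / e"
    using e T_gt by simp
  with elim have "0 < u"
    by linarith
  from elim have "T < e * u"
    using e by (simp add: divide_less_eq mult.commute)
  define n where "n = nat \<lfloor>(1 - e) * u / T\<rfloor>"
  have "0 \<le> (1 - e) * u / T"
    using e \<open>0 < u\<close> T_gt by simp
  then have n: "(1 - e) * u / T - 1 \<le> real n" "real n \<le> (1 - e) * u / T"
    unfolding n_def by linarith+
  then have "real n * T \<le> (1 - e) * u"
    using T_gt by (simp add: pos_le_divide_eq)
  then have "sigma u \<le> (T / (e * u)) ^ n"
    using e \<open>0 < u\<close> by (intro sigma_le_power) (auto simp: algebra_simps)
  then have "ln (sigma u) \<le> real n * ln (T / (e * u))"
    using sigma_pos[of u] \<open>0 < u\<close> e T_gt by (simp add: ln_realpow[symmetric])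
  also have "\<dots> = - (real n * ln (e * u / T))"
    using \<open>0 < u\<close> e T_gt by (simp add: ln_div algebra_simps)
  finally have "real n * ln (e * u / T) \<le> - ln (sigma u)"
    by simp
  moreover have "0 \<le> ln (e * u / T)"
    using \<open>T < e * u\<close> T_gt by simp
  ultimately show ?case
    using mult_right_mono[OF n(1) \<open>0 \<le> ln (e * u / T)\<close>] by linarith
qed

lemma neg_ln_sigma_le:
  assumes b: "0 < b" "b < T"
  obtains k c where "0 < c" "\<forall>\<^sub>F u in at_top. - ln (sigma u) \<le> k + (u / b + 1) * ln (u / c)"
proof -
  define c where "c = (LINT t:{b..T}|lborel. chi t)"
  have "0 < c" "c \<le> T - b"
    unfolding c_def using chi_mass_pos chi_mass_le b by auto
  obtain beta where beta: "0 < beta" "\<And>r. 0 \<le> r \<Longrightarrow> r \<le> T \<Longrightarrow> beta \<le> sigma r"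
    using sigma_uniformly_pos[of T] T_gt by auto
  have "\<forall>\<^sub>F u in at_top. - ln (sigma u) \<le> - ln beta + (u / b + 1) * ln (u / c)"
    using eventually_ge_at_top[of T]
  proof eventually_elim
    case (elim u)
    define n where "n = nat \<lceil>(u - T) / b\<rceil>"
    have "0 \<le> (u - T) / b"
      using elim b by simp
    then have n: "(u - T) / b \<le> real n" "real n < (u - T) / b + 1"
      unfolding n_def by linarith+
    moreover have "(u - T) / b \<le> u / b"
      using b T_gt by (simp add: divide_right_mono)
    ultimately have n_le: "real n \<le> u / b + 1"
      by linarith
    from n(1) have "u \<le> T + real n * b"
      using b by (simp add: pos_divide_le_eq algebra_simps)
    then have "beta * (c / u) ^ n \<le> sigma u"
      unfolding c_def using b beta elim T_gt by (intro sigma_ge_power) auto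
    moreover have "0 < beta * (c / u) ^ n"
      using beta \<open>0 < c\<close> elim T_gt by simp
    ultimately have "ln (beta * (c / u) ^ n) \<le> ln (sigma u)"
      by (rule ln_mono)
    moreover have "ln (beta * (c / u) ^ n) = ln beta - real n * ln (u / c)"
      using beta \<open>0 < c\<close> elim T_gt by (simp add: ln_mult ln_realpow ln_div algebra_simps)
    moreover have "0 \<le> ln (u / c)"
      using \<open>c \<le> T - b\<close> \<open>0 < c\<close> b elim by simp
    ultimately show ?case
      using mult_right_mono[OF n_le \<open>0 \<le> ln (u / c)\<close>] by linarith
  qed
  with \<open>0 < c\<close> show ?thesis
    using that by blast
qed

lemma neg_ln_sigma_asymp: "((\<lambda>u. - ln (sigma u) / (u * ln u / T)) \<longlongrightarrow> 1) at_top"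
proof (rule tendsto_ratio_squeeze)
  show "\<forall>\<^sub>F u in at_top. 0 < u * ln u / T"
    using eventually_gt_at_top[of 1] by eventually_elim (use T_gt in simp)
next
  fix a :: real assume "a < 1"
  have "0 < min 1 (1 - a)"
    using \<open>a < 1\<close> by simp
  then obtain e where "0 < e" "e < min 1 (1 - a)"
    using dense by blast
  then have e: "0 < e" "e < 1" "a < 1 - e"
    by simp_all
  define g where "g u = ((1 - e) * u / T - 1) * ln (e * u / T)" for u
  have "((\<lambda>u. g u / (u * ln u / T)) \<longlongrightarrow> 1 - e) at_top"
    unfolding g_def using e T_gt by real_asymp
  moreover have "\<forall>\<^sub>F u in at_top. g u \<le> - ln (sigma u)"
    unfolding g_def using e(1,2) by (rule neg_ln_sigma_ge)
  ultimately show "\<exists>g m. a < m \<and> ((\<lambda>u. g u / (u * ln u / T)) \<longlongrightarrow> m) at_top \<and>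
      (\<forall>\<^sub>F u in at_top. g u \<le> - ln (sigma u))"
    using e by blast
next
  fix a :: real assume "1 < a"
  obtain b where "1 < b" "b < T" "T / b < a"
    using approx_T_from_below[OF \<open>1 < a\<close>] .
  moreover from \<open>1 < b\<close> have "0 < b"
    by simp
  ultimately obtain k c where "0 < c"
    and bound: "\<forall>\<^sub>F u in at_top. - ln (sigma u) \<le> k + (u / b + 1) * ln (u / c)"
    using neg_ln_sigma_le by blast
  define g where "g u = k + (u / b + 1) * ln (u / c)" for u
  have "((\<lambda>u. g u / (u * ln u / T)) \<longlongrightarrow> T / b) at_top"
    unfolding g_def using \<open>1 < b\<close> \<open>0 < c\<close> T_gt by (real_asymp simp: field_simps)
  moreover have "\<forall>\<^sub>F u in at_top. - ln (sigma u) \<le> g u"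
    unfolding g_def by (rule bound)
  ultimately show "\<exists>g m. m < a \<and> ((\<lambda>u. g u / (u * ln u / T)) \<longlongrightarrow> m) at_top \<and>
      (\<forall>\<^sub>F u in at_top. - ln (sigma u) \<le> g u)"
    using \<open>T / b < a\<close> by blast
qed

lemma sigma_asymp:
  "\<exists>\<epsilon>. (\<epsilon> \<longlongrightarrow> 0) at_top \<and> (\<forall>\<^sub>F u in at_top. sigma u = exp (- (u * ln u / T) * (1 + \<epsilon> u)))"
proof -
  have "\<forall>\<^sub>F u in at_top. u * ln u / T \<noteq> 0"
    using eventually_gt_at_top[of 1] by eventually_elim (use T_gt in simp)
  then obtain \<epsilon> where "(\<epsilon> \<longlongrightarrow> 0) at_top"
    and "\<forall>\<^sub>F u in at_top. - ln (sigma u) = u * ln u / T * (1 + \<epsilon> u)"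
    using relative_error_if_tendsto_ratio[OF neg_ln_sigma_asymp] by blast
  moreover from this(2) have "\<forall>\<^sub>F u in at_top. sigma u = exp (- (u * ln u / T) * (1 + \<epsilon> u))"
    using eventually_ge_at_top[of 0]
  proof eventually_elim
    case (elim u)
    then have "ln (sigma u) = - (u * ln u / T) * (1 + \<epsilon> u)"
      by (metis minus_minus minus_mult_left)
    with sigma_pos[OF \<open>0 \<le> u\<close>] show ?case
      by (metis exp_ln)
  qed
  ultimately show ?thesis
    by blast
qed

end

theorem proposition3:
  fixes chi sigma xi :: "real \<Rightarrow> real" and T :: real
  assumes chi_meas: "set_borel_measurable lborel {0..} chi"
    and chi_one: "\<And>t. 0 \<le> t \<Longrightarrow> t \<le> 1 \<Longrightarrow> chi t = 1"
    and chi_bounds: "\<And>t. t > 1 \<Longrightarrow> 0 \<le> chi t \<and> chi t \<le> 1"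
    and T_gt: "T > 1"
    and T_zero: "(\<integral>\<^sup>+ s\<in>{T..}. ennreal (chi s) \<partial>lborel) = 0"
    and T_min: "\<And>t. 0 \<le> t \<Longrightarrow> (\<integral>\<^sup>+ s\<in>{t..}. ennreal (chi s) \<partial>lborel) = 0 \<Longrightarrow> T \<le> t"
    and sigma_init: "\<And>u. 0 \<le> u \<Longrightarrow> u \<le> 1 \<Longrightarrow> sigma u = 1"
    and sigma_int: "\<And>u. u > 1 \<Longrightarrow> set_integrable lborel {0..u} (\<lambda>t. sigma (u - t) * chi t)"
    and sigma_eq: "\<And>u. u > 1 \<Longrightarrow> u * sigma u = (LINT t:{0..u}|lborel. sigma (u - t) * chi t)"
    and xi_eq: "\<And>u. u > 0 \<Longrightarrow> u = (LINT v:{1..}|lborel. chi v * exp (xi u * v))"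
  shows "(\<exists>\<epsilon>. (\<epsilon> \<longlongrightarrow> 0) at_top \<and>
            (\<forall>\<^sub>F u in at_top. xi u = ln u / T * (1 + \<epsilon> u)))
       \<and> (\<exists>\<epsilon>. (\<epsilon> \<longlongrightarrow> 0) at_top \<and>
            (\<forall>\<^sub>F u in at_top. sigma u = exp (- (u * ln u / T) * (1 + \<epsilon> u))))"
proof -
  interpret kernel_solution chi T sigma
    by unfold_locales (fact assms)+
  have "((\<lambda>u. xi u / (ln u / T)) \<longlongrightarrow> 1) at_top"
    using xi_eq by (intro exp_moment_inverse_asymp) (simp add: exp_moment_def)
  moreover have "\<forall>\<^sub>F u in at_top. ln u / T \<noteq> 0"
    using eventually_gt_at_top[of 1] by eventually_elim (use T_gt in simp)
  ultimately have "\<exists>\<epsilon>. (\<epsilon> \<longlongrightarrow> 0) at_top \<and>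
      (\<forall>\<^sub>F u in at_top. xi u = ln u / T * (1 + \<epsilon> u))"
    by (rule relative_error_if_tendsto_ratio)
  with sigma_asymp show ?thesis
    by blast
qed

end
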